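(* Let $S=\{V^0,V^1,V^2\}$ be a partition of $V(T_A)$ into three classes and $\sigma$ an ordering of $V(T_A)$ such that $S$ and $\sigma$ are strongly consistent. Then none of the induced subgraphs $T_A[V^0]$, $T_A[V^1]$, $T_A[V^2]$ is connected. Moreover, for every simple path $C_0$ in $T_A$, the graph $T_A-V(C_0)$ has proper thinness equal to $3$.
   Context: For a graph $G=(V,E)$, a linear ordering $<$ of $V$ and a partition of $V$ into classes are called strongly consistent if for every triple $r<s<t$ of vertices with $rt\in E$: if $r$ and $s$ belong to the same class then $st\in E$, and if $s$ and $t$ belong to the same class then $rs\in E$. The proper thinness $\mathrm{pthin}(G)$ is the minimum $k$ such that some ordering of $V$ and some partition of $V$ into $k$ classes are strongly consistent. $T_0$ is the subdivided star $K_{1,5}$: a center adjacent to five vertices, each of which is adjacent to one further leaf (11 vertices). $T_A$ is the tree obtained from three disjoint copies of $T_0$ and a new vertex $v_0$ by making $v_0$ adjacent to one leaf of each copy. $G[X]$ denotes the induced subgraph on $X$ and $G-X$ the induced subgraph on $V(G)\setminus X$. *)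

theory Defs
  imports Main "HOL-Library.Disjoint_Sets"
begin

text \<open>Graphs: a vertex set V and a symmetric irreflexive adjacency predicate E.
  Everything is implicitly restricted to V (induced subgraphs).\<close>

definition same_class :: "'a set set \<Rightarrow> 'a \<Rightarrow> 'a \<Rightarrow> bool" where
  "same_class P x y \<longleftrightarrow> (\<exists>X\<in>P. x \<in> X \<and> y \<in> X)"

definition strongly_consistent ::
  "'a set \<Rightarrow> ('a \<Rightarrow> 'a \<Rightarrow> bool) \<Rightarrow> 'a rel \<Rightarrow> 'a set set \<Rightarrow> bool" where
  "strongly_consistent V E ord P \<longleftrightarrow>
     (\<forall>r\<in>V. \<forall>s\<in>V. \<forall>t\<in>V. (r, s) \<in> ord \<and> (s, t) \<in> ord \<and> E r t \<longrightarrow>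
        (same_class P r s \<longrightarrow> E s t) \<and> (same_class P s t \<longrightarrow> E r s))"

definition pthin :: "'a set \<Rightarrow> ('a \<Rightarrow> 'a \<Rightarrow> bool) \<Rightarrow> nat" where
  "pthin V E = (LEAST k. \<exists>ord P. strict_linear_order_on V ord \<and> partition_on V P \<and>
                   card P = k \<and> strongly_consistent V E ord P)"

definition connected_induced :: "('a \<Rightarrow> 'a \<Rightarrow> bool) \<Rightarrow> 'a set \<Rightarrow> bool" where
  "connected_induced E X \<longleftrightarrow> X \<noteq> {} \<and>
     (\<forall>x\<in>X. \<forall>y\<in>X. (\<lambda>a b. a \<in> X \<and> b \<in> X \<and> E a b)\<^sup>*\<^sup>* x y)"

definition simple_path :: "'a set \<Rightarrow> ('a \<Rightarrow> 'a \<Rightarrow> bool) \<Rightarrow> 'a list \<Rightarrow> bool" where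
  "simple_path V E p \<longleftrightarrow> p \<noteq> [] \<and> distinct p \<and> set p \<subseteq> V \<and>
     (\<forall>i. Suc i < length p \<longrightarrow> E (p ! i) (p ! Suc i))"

text \<open>The tree T_A. Copy i (i<3) of T_0 has center Cen i, neighbours Mid i j (j<5),
  and leaves Leaf i j adjacent to Mid i j. Root is v_0, adjacent to Leaf i 0 of each copy.\<close>
datatype tv = Root | Cen nat | Mid nat nat | Leaf nat nat

definition TA_V :: "tv set" where
  "TA_V = {Root} \<union> {Cen i | i. i < 3} \<union> {Mid i j | i j. i < 3 \<and> j < 5}
          \<union> {Leaf i j | i j. i < 3 \<and> j < 5}"

definition TA_base :: "tv \<Rightarrow> tv \<Rightarrow> bool" where
  "TA_base x y \<longleftrightarrow>
     (\<exists>i j. i < 3 \<and> j < 5 \<and> x = Cen i \<and> y = Mid i j) \<or>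
     (\<exists>i j. i < 3 \<and> j < 5 \<and> x = Mid i j \<and> y = Leaf i j) \<or>
     (\<exists>i. i < 3 \<and> x = Root \<and> y = Leaf i 0)"

definition TA_E :: "tv \<Rightarrow> tv \<Rightarrow> bool" where
  "TA_E x y \<longleftrightarrow> TA_base x y \<or> TA_base y x"

end

theory Submission
  imports Defs
begin

(* With only two classes, a copy of T_0 admits no strongly consistent ordering.  If its centre
   lies right of the median of its five neighbours, then the second, third and fourth neighbour
   (from the left) all lie in the class avoiding the centre, and the leaf of the median neighbour
   has no admissible position; reversing the ordering excludes the other side.  Hence every copy
   of T_0 meets three classes.  With exactly three classes, each class meets all three copies, so
   a connected class contains v_0 together with its three neighbours, two of which lie on the same
   side of v_0, contradicting strong consistency.  Finally, a simple path meets at most two copies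
   of T_0: the rest of T_A still contains a copy, and the given ordering and partition, restricted
   to it, show that three classes suffice. *)

lemma same_class_sym: "same_class P x y \<Longrightarrow> same_class P y x"
  unfolding same_class_def by blast

lemma strict_linear_order_on_subset:
  "strict_linear_order_on V r \<Longrightarrow> U \<subseteq> V \<Longrightarrow> strict_linear_order_on U r"
  unfolding strict_linear_order_on_def using total_on_subset by blast

lemma strongly_consistent_restrict:
  assumes "strongly_consistent V E ord P" and "U \<subseteq> V"
  shows "strongly_consistent U E ord ((\<inter>) U ` P - {{}})"
proof -
  have "same_class P x y" if "same_class ((\<inter>) U ` P - {{}}) x y" for x y
    using that unfolding same_class_def by blast
  then show ?thesis
    using assms unfolding strongly_consistent_def by blast
qed

lemma partition_on_two_classes:
  assumes "partition_on V P" and "finite P" and "card P \<le> 2"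
  obtains f :: "'a \<Rightarrow> bool" where "\<And>x y. x \<in> V \<Longrightarrow> y \<in> V \<Longrightarrow> same_class P x y \<longleftrightarrow> f x = f y"
proof -
  consider "P = {}" | A where "P = {A}" | A B where "P = {A, B}" "A \<noteq> B"
  proof -
    have "card P = 0 \<or> card P = 1 \<or> card P = 2" using assms(3) by linarith
    then show thesis
      using that assms(2) by (auto simp: card_1_singleton_iff card_2_iff)
  qed
  then show ?thesis
  proof cases
    case 1
    then show ?thesis using that partition_onD1[OF assms(1)] by auto
  next
    case (2 A)
    then show ?thesis using that[of "\<lambda>_. True"] partition_onD1[OF assms(1)]
      by (auto simp: same_class_def)
  next
    case (3 A B)
    then have "A \<inter> B = {}" "V = A \<union> B"
      using partition_onD1[OF assms(1)] partition_onD2[OF assms(1)] by (auto simp: disjoint_def)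
    then show ?thesis using that[of "\<lambda>x. x \<in> A"] 3 by (auto simp: same_class_def)
  qed
qed

lemma strongly_consistent_same_side_neighbours:
  assumes "strict_linear_order_on V ord" "strongly_consistent V E ord P" "symp E"
    and "u \<in> V" "w \<in> V" "v \<in> V" "u \<noteq> w" "E u v" "E w v" "\<not> E u w"
    and "same_class P u v" "same_class P w v"
    and "(u, v) \<in> ord \<longleftrightarrow> (w, v) \<in> ord"
  shows False
proof -
  have "u \<noteq> v" "w \<noteq> v" using assms(3,8-10) by (metis sympD)+
  then show False
    using assms unfolding strict_linear_order_on_def strongly_consistent_def total_on_def
    by (metis same_class_sym sympD)
qed

lemma strongly_consistent_no_monochromatic_claw:
  assumes "strict_linear_order_on V ord" "strongly_consistent V E ord P" "symp E"
    and "v \<in> V" "{u0, u1, u2} \<subseteq> V" "distinct [u0, u1, u2]"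
    and "\<And>u. u \<in> {u0, u1, u2} \<Longrightarrow> E u v \<and> same_class P u v"
    and "\<And>u w. u \<in> {u0, u1, u2} \<Longrightarrow> w \<in> {u0, u1, u2} \<Longrightarrow> \<not> E u w"
  shows False
proof -
  have pair: "((u, v) \<in> ord \<longleftrightarrow> (w, v) \<in> ord) \<Longrightarrow> False"
    if "u \<in> {u0, u1, u2}" "w \<in> {u0, u1, u2}" "u \<noteq> w" for u w
    using strongly_consistent_same_side_neighbours[OF assms(1-3) _ _ assms(4), of u w]
      assms(5,7,8) that by blast
  show False
    using pair[of u0 u1] pair[of u0 u2] pair[of u1 u2] assms(6) by auto
qed

lemma pthin_eqI:
  assumes "strict_linear_order_on V ord" "partition_on V P" "strongly_consistent V E ord P"
    and "card P = k"
    and "\<And>ord' Q. strict_linear_order_on V ord' \<Longrightarrow> partition_on V Q \<Longrightarrow>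
      strongly_consistent V E ord' Q \<Longrightarrow> k \<le> card Q"
  shows "pthin V E = k"
  unfolding pthin_def using assms by (intro Least_equality) blast+

definition order_rank :: "'a set \<Rightarrow> 'a rel \<Rightarrow> 'a \<Rightarrow> int" where
  "order_rank V r x = int (card {y \<in> V. (y, x) \<in> r})"

lemma order_rank_less:
  assumes "finite V" "strict_linear_order_on V r" "x \<in> V" "(x, y) \<in> r"
  shows "order_rank V r x < order_rank V r y"
proof -
  have "trans r" "irrefl r" using assms(2) by (auto simp: strict_linear_order_on_def)
  then have "{z \<in> V. (z, x) \<in> r} \<subset> {z \<in> V. (z, y) \<in> r}"
    using assms(3,4) by (auto simp: irrefl_def dest: transD)
  then show ?thesis
    unfolding order_rank_def using assms(1) by (simp add: psubset_card_mono)
qed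

lemma order_rank_less_iff:
  assumes "finite V" "strict_linear_order_on V r" "x \<in> V" "y \<in> V"
  shows "(x, y) \<in> r \<longleftrightarrow> order_rank V r x < order_rank V r y"
  using order_rank_less[OF assms(1,2)] assms(2-4)
  unfolding strict_linear_order_on_def total_on_def
  by (metis less_irrefl less_asym)

lemma inj_on_order_rank:
  assumes "finite V" "strict_linear_order_on V r"
  shows "inj_on (order_rank V r) V"
  using order_rank_less[OF assms] assms(2)
  unfolding strict_linear_order_on_def total_on_def inj_on_def
  by (metis less_irrefl)

definition consistent_ranking ::
  "'a set \<Rightarrow> ('a \<Rightarrow> 'a \<Rightarrow> bool) \<Rightarrow> ('a \<Rightarrow> int) \<Rightarrow> ('a \<Rightarrow> 'b) \<Rightarrow> bool" where
  "consistent_ranking V E p c \<longleftrightarrow>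
     (\<forall>r\<in>V. \<forall>s\<in>V. \<forall>t\<in>V. p r < p s \<and> p s < p t \<and> E r t \<longrightarrow>
        (c r = c s \<longrightarrow> E s t) \<and> (c s = c t \<longrightarrow> E r s))"

lemma consistent_rankingI:
  assumes "strongly_consistent V E ord P"
    and "\<And>x y. x \<in> V \<Longrightarrow> y \<in> V \<Longrightarrow> (x, y) \<in> ord \<longleftrightarrow> p x < p y"
    and "\<And>x y. x \<in> V \<Longrightarrow> y \<in> V \<Longrightarrow> same_class P x y \<longleftrightarrow> c x = c y"
  shows "consistent_ranking V E p c"
  using assms unfolding consistent_ranking_def strongly_consistent_def by blast

lemma consistent_ranking_left:
  "consistent_ranking V E p c \<Longrightarrow> r \<in> V \<Longrightarrow> s \<in> V \<Longrightarrow> t \<in> V \<Longrightarrow>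
    p r < p s \<Longrightarrow> p s < p t \<Longrightarrow> E r t \<Longrightarrow> \<not> E s t \<Longrightarrow> c r \<noteq> c s"
  unfolding consistent_ranking_def by blast

lemma consistent_ranking_right:
  "consistent_ranking V E p c \<Longrightarrow> r \<in> V \<Longrightarrow> s \<in> V \<Longrightarrow> t \<in> V \<Longrightarrow>
    p r < p s \<Longrightarrow> p s < p t \<Longrightarrow> E r t \<Longrightarrow> \<not> E r s \<Longrightarrow> c s \<noteq> c t"
  unfolding consistent_ranking_def by blast

lemma consistent_ranking_mirror:
  assumes "symp E" "consistent_ranking V E p c"
  shows "consistent_ranking V E (\<lambda>x. - p x) c"
  using assms unfolding consistent_ranking_def by (metis neg_less_iff_less sympD)

lemma sorted_enumeration_five:
  fixes g :: "nat \<Rightarrow> 'b::linorder"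
  assumes "inj_on g {..<5}"
  obtains j0 j1 j2 j3 j4 where "distinct [j0, j1, j2, j3, j4]" "{j0, j1, j2, j3, j4} = {..<5}"
    "g j0 < g j1" "g j1 < g j2" "g j2 < g j3" "g j3 < g j4"
proof -
  define js where "js = sort_key g [0..<5]"
  have js: "length js = 5" "distinct js" "set js = {..<5}"
    unfolding js_def by auto
  have "sorted_wrt (<) (map g js)"
    unfolding strict_sorted_iff using assms js by (auto simp: js_def distinct_map)
  then show thesis
    using that js by (auto simp: numeral_eq_Suc length_Suc_conv)
qed

lemma successively_iff_nth:
  "successively P xs \<longleftrightarrow> (\<forall>i. Suc i < length xs \<longrightarrow> P (xs ! i) (xs ! Suc i))"
  by (induction P xs rule: successively.induct) (auto simp: All_less_Suc2)

lemma TA_E_simps [simp]: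
  "TA_E (Cen i) (Cen k) = False"
  "TA_E (Cen i) (Mid k j) \<longleftrightarrow> i = k \<and> i < 3 \<and> j < 5"
  "TA_E (Mid k j) (Cen i) \<longleftrightarrow> i = k \<and> i < 3 \<and> j < 5"
  "TA_E (Cen i) (Leaf k j) = False" "TA_E (Leaf k j) (Cen i) = False"
  "TA_E (Mid i j) (Mid k l) = False"
  "TA_E (Mid i j) (Leaf k l) \<longleftrightarrow> i = k \<and> j = l \<and> i < 3 \<and> j < 5"
  "TA_E (Leaf k l) (Mid i j) \<longleftrightarrow> i = k \<and> j = l \<and> i < 3 \<and> j < 5"
  "TA_E (Leaf i j) (Leaf k l) = False"
  "TA_E Root x \<longleftrightarrow> (\<exists>i<3. x = Leaf i 0)" "TA_E x Root \<longleftrightarrow> (\<exists>i<3. x = Leaf i 0)"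
  by (auto simp: TA_E_def TA_base_def)

lemma symp_TA_E: "symp TA_E"
  by (auto simp: symp_def TA_E_def)

lemma finite_TA_V: "finite TA_V"
  unfolding TA_V_def by (intro finite_UnI finite_image_set2 finite_image_set) auto

definition T0_copy :: "nat \<Rightarrow> tv set" where
  "T0_copy i = {Cen i} \<union> {Mid i j | j. j < 5} \<union> {Leaf i j | j. j < 5}"

lemma T0_copy_iff [simp]:
  "Root \<notin> T0_copy i" "Cen k \<in> T0_copy i \<longleftrightarrow> k = i"
  "Mid k j \<in> T0_copy i \<longleftrightarrow> k = i \<and> j < 5" "Leaf k j \<in> T0_copy i \<longleftrightarrow> k = i \<and> j < 5"
  by (auto simp: T0_copy_def)

lemma finite_T0_copy: "finite (T0_copy i)"
  unfolding T0_copy_def by auto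

lemma T0_copy_subset_TA_V: "i < 3 \<Longrightarrow> T0_copy i \<subseteq> TA_V"
  by (auto simp: T0_copy_def TA_V_def)

context
  fixes i :: nat and p :: "tv \<Rightarrow> int" and f :: "tv \<Rightarrow> bool"
  assumes i: "i < 3" and inj: "inj_on p (T0_copy i)"
    and cons: "consistent_ranking (T0_copy i) TA_E p f"
begin

lemma leaf_after_center:
  assumes "b < 5" "d < 5" "p (Mid i b) < p (Mid i d)" "p (Mid i d) < p (Cen i)"
    and "f (Mid i b) \<noteq> f (Cen i)" "f (Mid i d) \<noteq> f (Cen i)"
  shows "p (Cen i) < p (Leaf i d)"
proof -
  have "p (Leaf i d) \<noteq> p (Mid i b)" "p (Leaf i d) \<noteq> p (Cen i)"
    using inj_on_eq_iff[OF inj] assms(1,2) by auto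
  moreover have "\<not> p (Leaf i d) < p (Mid i b)"
    using consistent_ranking_left[OF cons, of "Leaf i d" "Mid i b" "Mid i d"]
      consistent_ranking_right[OF cons, of "Leaf i d" "Mid i b" "Mid i d"] assms i by auto
  moreover have "\<not> (p (Mid i b) < p (Leaf i d) \<and> p (Leaf i d) < p (Cen i))"
    using consistent_ranking_left[OF cons, of "Mid i b" "Leaf i d" "Cen i"]
      consistent_ranking_right[OF cons, of "Mid i b" "Leaf i d" "Cen i"] assms i by auto
  ultimately show ?thesis using assms(3,4) by linarith
qed

lemma median_mid_after_center:
  assumes "distinct [j0, j1, j2, j3, j4]" "j0 < 5" "j1 < 5" "j2 < 5" "j3 < 5" "j4 < 5"
    and "p (Mid i j0) < p (Mid i j1)" "p (Mid i j1) < p (Mid i j2)"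
    and "p (Mid i j2) < p (Mid i j3)" "p (Mid i j3) < p (Mid i j4)"
  shows "p (Cen i) < p (Mid i j2)"
proof (rule ccontr)
  assume "\<not> ?thesis"
  moreover have "p (Mid i j2) \<noteq> p (Cen i)"
    using assms(4) by (simp add: inj_on_eq_iff[OF inj])
  ultimately have c: "p (Mid i j2) < p (Cen i)"
    by linarith
  have f1: "f (Mid i j1) \<noteq> f (Cen i)" and f2: "f (Mid i j2) \<noteq> f (Cen i)"
    using consistent_ranking_right[OF cons, of "Mid i j0" _ "Cen i"] assms c i by auto
  have f3: "f (Mid i j3) \<noteq> f (Cen i)"
  proof (cases "p (Mid i j3) < p (Cen i)")
    case True
    then show ?thesis
      using consistent_ranking_right[OF cons, of "Mid i j0" "Mid i j3" "Cen i"] assms i by auto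
  next
    case False
    moreover have "p (Mid i j3) \<noteq> p (Cen i)"
      using assms(5) by (simp add: inj_on_eq_iff[OF inj])
    ultimately have "p (Cen i) < p (Mid i j3)"
      by linarith
    then show ?thesis
      using consistent_ranking_left[OF cons, of "Cen i" "Mid i j3" "Mid i j4"] assms i by auto
  qed
  have leaf: "p (Cen i) < p (Leaf i j2)"
    using leaf_after_center[of j1 j2] assms c f1 f2 by auto
  show False
  proof (cases "p (Mid i j3) < p (Leaf i j2)")
    case True
    then show False
      using consistent_ranking_left[OF cons, of "Mid i j2" "Mid i j3" "Leaf i j2"] f2 f3 assms i
      by auto
  next
    case False
    moreover have "p (Mid i j3) \<noteq> p (Leaf i j2)"
      using assms(4,5) by (simp add: inj_on_eq_iff[OF inj])
    ultimately have "p (Leaf i j2) < p (Mid i j3)"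
      by linarith
    then show False
      using consistent_ranking_left[OF cons, of "Cen i" "Leaf i j2" "Mid i j3"]
        consistent_ranking_right[OF cons, of "Cen i" "Leaf i j2" "Mid i j3"] leaf f3 assms i
      by auto
  qed
qed

end

theorem T0_copy_no_two_class_ranking:
  assumes i: "i < 3" and inj: "inj_on p (T0_copy i)"
    and cons: "consistent_ranking (T0_copy i) TA_E p (f :: tv \<Rightarrow> bool)"
  shows False
proof -
  have "inj_on (\<lambda>j. p (Mid i j)) {..<5}"
    by (intro inj_onI) (simp add: inj_on_eq_iff[OF inj])
  then obtain j0 j1 j2 j3 j4 where js: "distinct [j0, j1, j2, j3, j4]" "{j0, j1, j2, j3, j4} = {..<5}"
    and sorted: "p (Mid i j0) < p (Mid i j1)" "p (Mid i j1) < p (Mid i j2)"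
      "p (Mid i j2) < p (Mid i j3)" "p (Mid i j3) < p (Mid i j4)"
    by (rule sorted_enumeration_five)
  have "p (Cen i) < p (Mid i j2)"
    using median_mid_after_center[OF i inj cons js(1) _ _ _ _ _ sorted] js(2) by auto
  moreover have "- p (Cen i) < - p (Mid i j2)"
    using median_mid_after_center[OF i _ consistent_ranking_mirror[OF symp_TA_E cons],
        of j4 j3 j2 j1 j0] inj js sorted by (auto simp: inj_on_def)
  ultimately show False by simp
qed

lemma T0_copy_needs_three_classes:
  assumes "i < 3" "strict_linear_order_on (T0_copy i) ord" "partition_on (T0_copy i) P"
    and "strongly_consistent (T0_copy i) TA_E ord P"
  shows "3 \<le> card P"
proof (rule ccontr)
  assume "\<not> 3 \<le> card P"
  moreover have "finite P"
    using finite_elements[OF finite_T0_copy assms(3)] .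
  ultimately obtain f :: "tv \<Rightarrow> bool"
    where f: "\<And>x y. x \<in> T0_copy i \<Longrightarrow> y \<in> T0_copy i \<Longrightarrow> same_class P x y \<longleftrightarrow> f x = f y"
    using partition_on_two_classes[OF assms(3)] by force
  let ?p = "order_rank (T0_copy i) ord"
  have "consistent_ranking (T0_copy i) TA_E ?p f"
    using assms(4) order_rank_less_iff[OF finite_T0_copy assms(2)] f by (rule consistent_rankingI)
  then show False
    using T0_copy_no_two_class_ranking[OF assms(1) inj_on_order_rank[OF finite_T0_copy assms(2)]]
    by blast
qed

lemma T0_copy_meets_three_classes:
  assumes "finite V" "i < 3" "T0_copy i \<subseteq> V" "strict_linear_order_on V ord" "partition_on V P"
    and "strongly_consistent V TA_E ord P"
  shows "3 \<le> card {X \<in> P. X \<inter> T0_copy i \<noteq> {}}"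
proof -
  let ?K = "T0_copy i"
  have "3 \<le> card ((\<inter>) ?K ` P - {{}})"
  proof (rule T0_copy_needs_three_classes[OF assms(2)])
    show "strict_linear_order_on ?K ord"
      by (rule strict_linear_order_on_subset[OF assms(4,3)])
    show "partition_on ?K ((\<inter>) ?K ` P - {{}})"
      using partition_on_restrict[OF assms(5), of ?K] assms(3) by (simp add: Int_absorb2)
    show "strongly_consistent ?K TA_E ord ((\<inter>) ?K ` P - {{}})"
      by (rule strongly_consistent_restrict[OF assms(6,3)])
  qed
  also have "(\<inter>) ?K ` P - {{}} = (\<inter>) ?K ` {X \<in> P. X \<inter> ?K \<noteq> {}}"
    by blast
  also have "card \<dots> \<le> card {X \<in> P. X \<inter> ?K \<noteq> {}}"
    using finite_elements[OF assms(1,5)] by (intro card_image_le) simp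
  finally show ?thesis .
qed

lemma edge_leaving_T0_copy:
  "x \<in> T0_copy i \<Longrightarrow> y \<notin> T0_copy i \<Longrightarrow> TA_E x y \<Longrightarrow> x = Leaf i 0 \<and> y = Root"
  by (cases x; cases y) auto

lemma walk_leaving_T0_copy:
  assumes "(\<lambda>a b. a \<in> X \<and> b \<in> X \<and> TA_E a b)\<^sup>*\<^sup>* x y" "x \<in> T0_copy i" "y \<notin> T0_copy i"
  shows "Leaf i 0 \<in> X \<and> Root \<in> X"
proof -
  have "y \<in> T0_copy i \<or> Leaf i 0 \<in> X \<and> Root \<in> X"
    using assms(1)
  proof (induction rule: rtranclp_induct)
    case (step b c)
    then show ?case using edge_leaving_T0_copy[of b i c] by auto
  qed (use assms(2) in simp)
  then show ?thesis using assms(3) by blast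
qed

lemma connected_meeting_all_copies_contains_root_neighbours:
  assumes "connected_induced TA_E X" "\<And>i. i < 3 \<Longrightarrow> X \<inter> T0_copy i \<noteq> {}" "k < 3"
  shows "Leaf k 0 \<in> X \<and> Root \<in> X"
proof -
  define l :: nat where "l = (if k = 0 then 1 else 0)"
  obtain x where x: "x \<in> X" "x \<in> T0_copy k" using assms(2,3) by blast
  have "l < 3" by (simp add: l_def)
  then obtain y where y: "y \<in> X" "y \<in> T0_copy l" using assms(2) by blast
  have "y \<notin> T0_copy k"
    using y(2) l_def by (cases y) auto
  moreover have "(\<lambda>a b. a \<in> X \<and> b \<in> X \<and> TA_E a b)\<^sup>*\<^sup>* x y"
    using assms(1) x(1) y(1) unfolding connected_induced_def by blast
  ultimately show ?thesis
    using walk_leaving_T0_copy x(2) by blast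
qed

lemma TA_three_classes_not_connected:
  assumes "partition_on TA_V P" "card P = 3" "strict_linear_order_on TA_V \<sigma>"
    and "strongly_consistent TA_V TA_E \<sigma> P" "X \<in> P"
  shows "\<not> connected_induced TA_E X"
proof
  assume conn: "connected_induced TA_E X"
  have "X \<inter> T0_copy i \<noteq> {}" if "i < 3" for i
  proof -
    have "3 \<le> card {Y \<in> P. Y \<inter> T0_copy i \<noteq> {}}"
      using T0_copy_meets_three_classes[OF finite_TA_V that T0_copy_subset_TA_V[OF that]
          assms(3,1,4)] .
    then have "{Y \<in> P. Y \<inter> T0_copy i \<noteq> {}} = P"
      using finite_elements[OF finite_TA_V assms(1)] assms(2) by (intro card_seteq) auto
    then show ?thesis using assms(5) by blast
  qed
  then have R: "Leaf k 0 \<in> X \<and> Root \<in> X" if "k < 3" for k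
    using connected_meeting_all_copies_contains_root_neighbours[OF conn _ that] by blast
  have X: "Root \<in> X" "Leaf 0 0 \<in> X" "Leaf 1 0 \<in> X" "Leaf 2 0 \<in> X"
    using R[of 0] R[of 1] R[of 2] by simp_all
  show False
  proof (rule strongly_consistent_no_monochromatic_claw[OF assms(3,4) symp_TA_E,
        of Root "Leaf 0 0" "Leaf 1 0" "Leaf 2 0"])
    show "Root \<in> TA_V" "{Leaf 0 0, Leaf 1 0, Leaf 2 0} \<subseteq> TA_V"
      by (simp_all add: TA_V_def)
    show "TA_E u Root \<and> same_class P u Root" if "u \<in> {Leaf 0 0, Leaf 1 0, Leaf 2 0}" for u
      using that X assms(5) unfolding same_class_def by auto
  qed auto
qed

fun copy_index :: "tv \<Rightarrow> nat" where
  "copy_index Root = 3"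
| "copy_index (Cen i) = i"
| "copy_index (Mid i j) = i"
| "copy_index (Leaf i j) = i"

lemma copy_index_edge: "TA_E x y \<Longrightarrow> x \<noteq> Root \<Longrightarrow> y \<noteq> Root \<Longrightarrow> copy_index x = copy_index y"
  by (cases x; cases y) auto

lemma copy_index_T0_copy: "x \<in> T0_copy i \<Longrightarrow> copy_index x = i"
  by (cases x) auto

lemma copy_index_rootless_walk:
  "successively TA_E xs \<Longrightarrow> Root \<notin> set xs \<Longrightarrow> x \<in> set xs \<Longrightarrow> copy_index x = copy_index (hd xs)"
  by (induction TA_E xs rule: successively.induct) (auto dest: copy_index_edge)

lemma simple_path_copy_indices:
  assumes "simple_path TA_V TA_E C"
  obtains a b where "\<And>x. x \<in> set C \<Longrightarrow> x \<noteq> Root \<Longrightarrow> copy_index x \<in> {a, b}"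
proof -
  have walk: "successively TA_E C" and "distinct C"
    using assms by (simp_all add: simple_path_def successively_iff_nth)
  show thesis
  proof (cases "Root \<in> set C")
    case True
    then obtain ys zs where C: "C = ys @ Root # zs"
      by (meson split_list)
    then have "successively TA_E ys" "successively TA_E zs" "Root \<notin> set ys" "Root \<notin> set zs"
      using walk \<open>distinct C\<close> by (auto simp: successively_append_iff successively_Cons)
    then show thesis
      using that[of "copy_index (hd ys)" "copy_index (hd zs)"] C copy_index_rootless_walk by auto
  next
    case False
    then show thesis
      using that[of "copy_index (hd C)" "copy_index (hd C)"] copy_index_rootless_walk walk by auto
  qed
qed

lemma simple_path_avoids_T0_copy:
  assumes "simple_path TA_V TA_E C"
  obtains i where "i < 3" "T0_copy i \<inter> set C = {}"
proof -
  obtain a b where ab: "\<And>x. x \<in> set C \<Longrightarrow> x \<noteq> Root \<Longrightarrow> copy_index x \<in> {a, b}"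
    using simple_path_copy_indices[OF assms] by blast
  obtain i where i: "i < 3" "i \<noteq> a" "i \<noteq> b"
  proof -
    show thesis using that[of 0] that[of 1] that[of 2] by linarith
  qed
  have "x \<notin> set C" if "x \<in> T0_copy i" for x
  proof
    assume "x \<in> set C"
    moreover have "x \<noteq> Root" using that by auto
    ultimately show False using ab copy_index_T0_copy[OF that] i by blast
  qed
  then show thesis
    using that[OF i(1)] by blast
qed

lemma pthin_TA_minus_simple_path:
  assumes "partition_on TA_V P" "card P = 3" "strict_linear_order_on TA_V \<sigma>"
    and "strongly_consistent TA_V TA_E \<sigma> P" "simple_path TA_V TA_E C"
  shows "pthin (TA_V - set C) TA_E = 3"
proof -
  define W where "W = TA_V - set C"
  obtain i where i: "i < 3" "T0_copy i \<inter> set C = {}"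
    using simple_path_avoids_T0_copy[OF assms(5)] .
  have "finite W" "T0_copy i \<subseteq> W"
    using finite_TA_V T0_copy_subset_TA_V[OF i(1)] i(2) by (auto simp: W_def)
  have lower: "3 \<le> card Q"
    if "strict_linear_order_on W ord" "partition_on W Q" "strongly_consistent W TA_E ord Q" for ord Q
  proof -
    have "3 \<le> card {X \<in> Q. X \<inter> T0_copy i \<noteq> {}}"
      using T0_copy_meets_three_classes[OF \<open>finite W\<close> i(1) \<open>T0_copy i \<subseteq> W\<close> that] .
    also have "\<dots> \<le> card Q"
      using finite_elements[OF \<open>finite W\<close> that(2)] by (intro card_mono) auto
    finally show ?thesis .
  qed
  let ?P = "(\<inter>) W ` P - {{}}"
  have "W \<subseteq> TA_V" by (auto simp: W_def)
  have slo: "strict_linear_order_on W \<sigma>"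
    by (rule strict_linear_order_on_subset[OF assms(3) \<open>W \<subseteq> TA_V\<close>])
  have part: "partition_on W ?P"
    using partition_on_restrict[OF assms(1), of W] \<open>W \<subseteq> TA_V\<close> by (simp add: Int_absorb2)
  have sc: "strongly_consistent W TA_E \<sigma> ?P"
    by (rule strongly_consistent_restrict[OF assms(4) \<open>W \<subseteq> TA_V\<close>])
  have "card ?P \<le> card ((\<inter>) W ` P)"
    by (rule card_Diff1_le)
  also have "\<dots> \<le> 3"
    using card_image_le[OF finite_elements[OF finite_TA_V assms(1)]] assms(2) by simp
  finally have "card ?P = 3"
    using lower[OF slo part sc] by simp
  then show ?thesis
    unfolding W_def[symmetric] using pthin_eqI[OF slo part sc] lower by blast
qed

theorem proposition7:
  fixes V0 V1 V2 :: "tv set" and \<sigma> :: "tv rel"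
  assumes "partition_on TA_V {V0, V1, V2}"
    and "card {V0, V1, V2} = 3"
    and "strict_linear_order_on TA_V \<sigma>"
    and "strongly_consistent TA_V TA_E \<sigma> {V0, V1, V2}"
  shows "\<not> connected_induced TA_E V0 \<and> \<not> connected_induced TA_E V1 \<and> \<not> connected_induced TA_E V2
    \<and> (\<forall>C0. simple_path TA_V TA_E C0 \<longrightarrow> pthin (TA_V - set C0) TA_E = 3)"
  using TA_three_classes_not_connected[OF assms] pthin_TA_minus_simple_path[OF assms] by blast

end
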